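(* Let $A$ be a transitive permutation group on a finite set $\Omega_1$ and $B$ a transitive permutation group on a finite set $\Omega_2$, where $\Omega_1$ and $\Omega_2$ are disjoint. Let $N_A \trianglelefteq A$ and $N_B \trianglelefteq B$ be normal subgroups, and let $\phi \colon A/N_A \to B/N_B$ be a group isomorphism. Define \[ C=\{(a,b)\in A\times B : \phi(aN_A)=bN_B\}, \] regarded as a permutation group on $\Omega_1 \sqcup \Omega_2$, where $(a,b)$ acts as $a$ on $\Omega_1$ and as $b$ on $\Omega_2$. Call $N_A$ an essential kernel in $A$ if there is no proper transitive subgroup $M<A$ (transitive on $\Omega_1$) such that $N_A M=A$. If $N_A$ is not an essential kernel in $A$, then $C$ is not minimal as a two-orbit permutation group on $\Omega_1 \sqcup \Omega_2$; that is, $C$ has a proper subgroup that is transitive on both $\Omega_1$ and $\Omega_2$.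
   Context: A two-orbit permutation group $P$ acting on $\Omega = \Omega_1 \sqcup \Omega_2$ (with orbits $\Omega_1$ and $\Omega_2$) is called minimal if it has no proper subgroup that is transitive on both $\Omega_1$ and $\Omega_2$. The group $C$ in the statement projects surjectively onto $A$ and onto $B$ and therefore has exactly the two orbits $\Omega_1$ and $\Omega_2$. *)

theory Defs
  imports "HOL-Algebra.Algebra"
begin

definition transitive_on :: "('a \<Rightarrow> 'a) set \<Rightarrow> 'a set \<Rightarrow> bool" where
  "transitive_on G S \<longleftrightarrow> (\<forall>x\<in>S. \<forall>y\<in>S. \<exists>g\<in>G. g x = y)"

abbreviation perm_grp :: "'a set \<Rightarrow> ('a \<Rightarrow> 'a) set \<Rightarrow> ('a \<Rightarrow> 'a) monoid" where
  "perm_grp S A \<equiv> (BijGroup S)\<lparr>carrier := A\<rparr>"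

definition glue :: "'a set \<Rightarrow> ('a \<Rightarrow> 'a) \<Rightarrow> ('a \<Rightarrow> 'a) \<Rightarrow> 'a \<Rightarrow> 'a" where
  "glue S1 a b = (\<lambda>x. if x \<in> S1 then a x else b x)"

definition fibre_product ::
  "'a set \<Rightarrow> ('a \<Rightarrow> 'a) set \<Rightarrow> ('a \<Rightarrow> 'a) set \<Rightarrow> 'a set \<Rightarrow> ('a \<Rightarrow> 'a) set \<Rightarrow> ('a \<Rightarrow> 'a) set
    \<Rightarrow> (('a \<Rightarrow> 'a) set \<Rightarrow> ('a \<Rightarrow> 'a) set) \<Rightarrow> ('a \<Rightarrow> 'a) set" where
  "fibre_product S1 A NA S2 B NB phi =
     {glue S1 a b | a b. a \<in> A \<and> b \<in> B \<and>
        phi (NA #>\<^bsub>perm_grp S1 A\<^esub> a) = NB #>\<^bsub>perm_grp S2 B\<^esub> b}"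

definition essential_kernel :: "'a set \<Rightarrow> ('a \<Rightarrow> 'a) set \<Rightarrow> ('a \<Rightarrow> 'a) set \<Rightarrow> bool" where
  "essential_kernel S A N \<longleftrightarrow>
     \<not> (\<exists>M. subgroup M (perm_grp S A) \<and> M \<noteq> A \<and> transitive_on M S \<and>
            N <#>\<^bsub>perm_grp S A\<^esub> M = A)"

end

theory Submission
  imports Defs
begin

(* If M is a proper transitive subgroup of A with N_A M = A, then M still maps onto A/N_A,
   so the pairs (m, b) in M x B with phi(N_A m) = N_B b form a subgroup of C whose projections
   are M and all of B. It is therefore transitive on both orbits, and it is proper because its
   first projection misses A - M. *)

definition pullback :: "'a set \<Rightarrow> ('a \<Rightarrow> 'c) \<Rightarrow> ('b \<Rightarrow> 'c) \<Rightarrow> 'b set \<Rightarrow> ('a \<times> 'b) set" where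
  "pullback M f g N = {(a, b). a \<in> M \<and> b \<in> N \<and> f a = g b}"

lemma subgroup_pullback:
  assumes G: "group G" and H: "group H" and Q: "group Q"
    and f: "f \<in> hom G Q" and g: "g \<in> hom H Q" and M: "subgroup M G"
  shows "subgroup (pullback M f g (carrier H)) (G \<times>\<times> H)"
proof -
  interpret GH: group "G \<times>\<times> H" using DirProd_group[OF G H] .
  interpret f: group_hom G Q f using G Q f by (simp add: group_hom_def group_hom_axioms_def)
  interpret g: group_hom H Q g using H Q g by (simp add: group_hom_def group_hom_axioms_def)
  interpret M: subgroup M G by (rule M)
  show ?thesis
  proof (rule GH.subgroupI)
    show "pullback M f g (carrier H) \<subseteq> carrier (G \<times>\<times> H)"
      by (auto simp: pullback_def)
    show "pullback M f g (carrier H) \<noteq> {}"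
      by (auto simp: pullback_def intro!: exI[of _ "\<one>\<^bsub>G\<^esub>"] exI[of _ "\<one>\<^bsub>H\<^esub>"])
  next
    fix p assume "p \<in> pullback M f g (carrier H)"
    then show "inv\<^bsub>G \<times>\<times> H\<^esub> p \<in> pullback M f g (carrier H)"
      by (auto simp: pullback_def inv_DirProd[OF G H])
  next
    fix p q assume "p \<in> pullback M f g (carrier H)" "q \<in> pullback M f g (carrier H)"
    then show "p \<otimes>\<^bsub>G \<times>\<times> H\<^esub> q \<in> pullback M f g (carrier H)"
      by (auto simp: pullback_def)
  qed
qed

lemma fst_pullback: "f ` M \<subseteq> g ` N \<Longrightarrow> fst ` pullback M f g N = M"
  by (force simp: pullback_def)

lemma snd_pullback: "g ` N \<subseteq> f ` M \<Longrightarrow> snd ` pullback M f g N = N"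
  by (force simp: pullback_def)

lemma pullback_mono: "M \<subseteq> M' \<Longrightarrow> pullback M f g N \<subseteq> pullback M' f g N"
  by (auto simp: pullback_def)

lemma (in normal) rcosets_eq_image_supplement:
  assumes "M \<subseteq> carrier G" and supplement: "H <#> M = carrier G"
  shows "(\<lambda>m. H #> m) ` M = rcosets H"
proof
  show "(\<lambda>m. H #> m) ` M \<subseteq> rcosets H"
    using assms(1) by (auto intro: rcosetsI)
next
  show "rcosets H \<subseteq> (\<lambda>m. H #> m) ` M"
  proof
    fix Y assume "Y \<in> rcosets H"
    then obtain a where "a \<in> carrier G" "Y = H #> a"
      by (auto simp: RCOSETS_def)
    moreover from \<open>a \<in> carrier G\<close> obtain n m where "n \<in> H" "m \<in> M" "a = n \<otimes> m"
      unfolding supplement[symmetric] set_mult_def by blast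
    moreover have "H #> (n \<otimes> m) = H #> m" if "n \<in> H" "m \<in> M"
      using that assms(1) coset_mult_assoc[symmetric] rcos_const is_group
      by (metis subset subset_iff)
    ultimately show "Y \<in> (\<lambda>m. H #> m) ` M" by blast
  qed
qed

lemma fst_quotient_pullback:
  assumes "N \<lhd> G" "phi \<in> hom (G Mod N) (H Mod L)" "M \<subseteq> carrier G"
  shows "fst ` pullback M (\<lambda>a. phi (N #>\<^bsub>G\<^esub> a)) (r_coset H L) (carrier H) = M"
proof (rule fst_pullback)
  show "(\<lambda>a. phi (N #>\<^bsub>G\<^esub> a)) ` M \<subseteq> r_coset H L ` carrier H"
    using hom_in_carrier[OF hom_compose[OF normal.r_coset_hom_Mod[OF assms(1)] assms(2)]] assms(3)
    by (auto simp: carrier_FactGroup[symmetric])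
qed

lemma snd_quotient_pullback:
  assumes "N \<lhd> G" "phi \<in> iso (G Mod N) (H Mod L)"
    and "M \<subseteq> carrier G" "N <#>\<^bsub>G\<^esub> M = carrier G"
  shows "snd ` pullback M (\<lambda>a. phi (N #>\<^bsub>G\<^esub> a)) (r_coset H L) (carrier H) = carrier H"
proof (rule snd_pullback)
  have "(\<lambda>a. phi (N #>\<^bsub>G\<^esub> a)) ` M = phi ` carrier (G Mod N)"
    using normal.rcosets_eq_image_supplement[OF assms(1,3,4)]
    by (simp add: image_image[symmetric] FactGroup_def)
  also have "\<dots> = r_coset H L ` carrier H"
    using assms(2) by (simp add: iso_def bij_betw_def carrier_FactGroup)
  finally show "r_coset H L ` carrier H \<subseteq> (\<lambda>a. phi (N #>\<^bsub>G\<^esub> a)) ` M" by simp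
qed

lemma subgroup_quotient_pullback:
  assumes "group G" "N \<lhd> G" "L \<lhd> H" "phi \<in> hom (G Mod N) (H Mod L)" "subgroup M G"
  shows "subgroup (pullback M (\<lambda>a. phi (N #>\<^bsub>G\<^esub> a)) (r_coset H L) (carrier H)) (G \<times>\<times> H)"
proof (rule subgroup_pullback)
  show "(\<lambda>a. phi (N #>\<^bsub>G\<^esub> a)) \<in> hom G (H Mod L)"
    using hom_compose[OF normal.r_coset_hom_Mod[OF assms(2)] assms(4)] by (simp add: comp_def)
  show "group H"
    using assms(3) by (rule normal.axioms(2))
  show "group (H Mod L)"
    using assms(3) by (rule normal.factorgroup_is_group)
  show "r_coset H L \<in> hom H (H Mod L)"
    using assms(3) by (rule normal.r_coset_hom_Mod)
qed (use assms(1,5) in auto)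

lemma glue_Bij:
  assumes "S1 \<inter> S2 = {}" "a \<in> Bij S1" "b \<in> Bij S2"
  shows "glue S1 a b \<in> Bij (S1 \<union> S2)"
proof -
  have "bij_betw (glue S1 a b) S1 S1"
    using assms(2) by (auto simp: Bij_def glue_def cong: bij_betw_cong)
  moreover have "bij_betw (glue S1 a b) S2 S2"
  proof (rule bij_betw_cong[THEN iffD2])
    show "bij_betw b S2 S2" using assms(3) by (simp add: Bij_def)
  qed (use assms(1) in \<open>auto simp: glue_def\<close>)
  ultimately have "bij_betw (glue S1 a b) (S1 \<union> S2) (S1 \<union> S2)"
    using assms(1) by (rule bij_betw_combine)
  moreover have "glue S1 a b \<in> extensional (S1 \<union> S2)"
    using Bij_imp_extensional[OF assms(3)] by (auto simp: glue_def extensional_def)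
  ultimately show ?thesis
    by (simp add: Bij_def)
qed

lemma glue_compose:
  assumes "S1 \<inter> S2 = {}" "a' \<in> Bij S1" "b' \<in> Bij S2"
  shows "glue S1 (compose S1 a a') (compose S2 b b') = compose (S1 \<union> S2) (glue S1 a b) (glue S1 a' b')"
  using assms Bij_imp_funcset[OF assms(2)] Bij_imp_funcset[OF assms(3)]
  by (fastforce simp: glue_def compose_def)

lemma subgroup_glue_image:
  assumes "S1 \<inter> S2 = {}" "subgroup A (BijGroup S1)" "subgroup B (BijGroup S2)"
    and K: "subgroup K (perm_grp S1 A \<times>\<times> perm_grp S2 B)"
  shows "subgroup ((\<lambda>(a, b). glue S1 a b) ` K) (BijGroup (S1 \<union> S2))"
proof -
  have A: "A \<subseteq> Bij S1" and B: "B \<subseteq> Bij S2"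
    using assms(2,3)[THEN subgroup.subset] by (simp_all add: BijGroup_def)
  have "(\<lambda>(a, b). glue S1 a b) \<in> hom (perm_grp S1 A \<times>\<times> perm_grp S2 B) (BijGroup (S1 \<union> S2))"
    using A B glue_Bij[OF assms(1)] glue_compose[OF assms(1)]
    by (intro homI) (auto simp: BijGroup_def)
  moreover have "group (perm_grp S1 A \<times>\<times> perm_grp S2 B)"
    using assms(2,3) by (intro DirProd_group subgroup.subgroup_is_group group_BijGroup)
  ultimately have "group_hom (perm_grp S1 A \<times>\<times> perm_grp S2 B) (BijGroup (S1 \<union> S2)) (\<lambda>(a, b). glue S1 a b)"
    using group_BijGroup by (simp add: group_hom_def group_hom_axioms_def)
  then show ?thesis
    using K by (rule group_hom.subgroup_img_is_subgroup)
qed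

lemma inj_on_glue:
  assumes "S1 \<inter> S2 = {}"
  shows "inj_on (\<lambda>(a, b). glue S1 a b) (extensional S1 \<times> extensional S2)"
proof (rule inj_onI, clarify)
  fix a b a' b'
  assume ext: "a \<in> extensional S1" "b \<in> extensional S2" "a' \<in> extensional S1" "b' \<in> extensional S2"
    and eq: "glue S1 a b = glue S1 a' b'"
  have "a x = a' x \<and> b x = b' x" for x
    using fun_cong[OF eq, of x] ext assms by (cases "x \<in> S1") (auto simp: glue_def extensional_def disjoint_iff)
  then show "a = a' \<and> b = b'" by auto
qed

lemma transitive_on_glue_image_left:
  assumes "transitive_on (fst ` K) S1"
  shows "transitive_on ((\<lambda>(a, b). glue S1 a b) ` K) S1"
  using assms by (force simp: transitive_on_def glue_def)

lemma transitive_on_glue_image_right: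
  assumes "S1 \<inter> S2 = {}" "transitive_on (snd ` K) S2"
  shows "transitive_on ((\<lambda>(a, b). glue S1 a b) ` K) S2"
  using assms by (force simp: transitive_on_def glue_def)

lemma fibre_product_eq_glue_image:
  "fibre_product S1 A NA S2 B NB phi =
     (\<lambda>(a, b). glue S1 a b) ` pullback A (\<lambda>a. phi (NA #>\<^bsub>perm_grp S1 A\<^esub> a)) (r_coset (perm_grp S2 B) NB) B"
  by (force simp: fibre_product_def pullback_def)

theorem mainTheorem1:
  fixes \<Omega>1 \<Omega>2 :: "'a set" and A B NA NB :: "('a \<Rightarrow> 'a) set"
    and phi :: "('a \<Rightarrow> 'a) set \<Rightarrow> ('a \<Rightarrow> 'a) set"
  assumes "finite \<Omega>1" and "finite \<Omega>2" and "\<Omega>1 \<inter> \<Omega>2 = {}"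
    and "subgroup A (BijGroup \<Omega>1)" and "transitive_on A \<Omega>1"
    and "subgroup B (BijGroup \<Omega>2)" and "transitive_on B \<Omega>2"
    and "NA \<lhd> perm_grp \<Omega>1 A" and "NB \<lhd> perm_grp \<Omega>2 B"
    and "phi \<in> iso (perm_grp \<Omega>1 A Mod NA) (perm_grp \<Omega>2 B Mod NB)"
    and "\<not> essential_kernel \<Omega>1 A NA"
  shows "\<exists>H. subgroup H (BijGroup (\<Omega>1 \<union> \<Omega>2)) \<and>
             H \<subset> fibre_product \<Omega>1 A NA \<Omega>2 B NB phi \<and>
             transitive_on H \<Omega>1 \<and> transitive_on H \<Omega>2"
proof -
  let ?G1 = "perm_grp \<Omega>1 A" and ?G2 = "perm_grp \<Omega>2 B" and ?glue = "\<lambda>(a, b). glue \<Omega>1 a b"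
  let ?P = "\<lambda>M. pullback M (\<lambda>a. phi (NA #>\<^bsub>?G1\<^esub> a)) (r_coset ?G2 NB) (carrier ?G2)"
  obtain M where M: "subgroup M ?G1" "M \<noteq> A" "transitive_on M \<Omega>1" "NA <#>\<^bsub>?G1\<^esub> M = A"
    using assms(11) unfolding essential_kernel_def by blast
  have "M \<subseteq> A"
    using subgroup.subset[OF M(1)] by simp
  have phi: "phi \<in> hom (?G1 Mod NA) (?G2 Mod NB)"
    using assms(10) by (simp add: iso_def)
  have fst_P: "fst ` ?P M = M" "fst ` ?P A = A"
    using fst_quotient_pullback[OF assms(8) phi] \<open>M \<subseteq> A\<close> by simp_all
  have snd_P: "snd ` ?P M = B"
    using snd_quotient_pullback[OF assms(8,10)] \<open>M \<subseteq> A\<close> M(4) by simp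
  have "?P M \<noteq> ?P A"
    using fst_P M(2) by metis
  then have "?P M \<subset> ?P A"
    using pullback_mono[OF \<open>M \<subseteq> A\<close>] by blast
  moreover have "?P A \<subseteq> extensional \<Omega>1 \<times> extensional \<Omega>2"
    using assms(4,6)[THEN subgroup.subset] by (auto simp: pullback_def BijGroup_def Bij_def)
  ultimately have "?glue ` ?P M \<subset> fibre_product \<Omega>1 A NA \<Omega>2 B NB phi"
    using inj_on_image_eq_iff[OF inj_on_glue[OF assms(3)]]
    by (auto simp: fibre_product_eq_glue_image)
  moreover have "subgroup (?glue ` ?P M) (BijGroup (\<Omega>1 \<union> \<Omega>2))"
    using subgroup_glue_image[OF assms(3,4,6)] subgroup_quotient_pullback[OF _ assms(8,9) phi M(1)]
      subgroup.subgroup_is_group[OF assms(4) group_BijGroup]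
    by simp
  moreover have "transitive_on (?glue ` ?P M) \<Omega>1" "transitive_on (?glue ` ?P M) \<Omega>2"
    using transitive_on_glue_image_left[of "?P M"] transitive_on_glue_image_right[OF assms(3), of "?P M"]
      fst_P snd_P M(3) assms(7) by simp_all
  ultimately show ?thesis by blast
qed

end
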